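(* For every integer $n\ge 1$, the triangular stacked prism $Y_{3,n}$ is odd prime.
   Context: All graphs are finite and simple. A graph $G$ of order $N$ is odd prime if there is a bijection $\ell:V(G)\to\{1,3,\ldots,2N-1\}$ with $\gcd(\ell(u),\ell(v))=1$ for every edge $uv$. For $k\ge 3$, $n\ge 1$, the stacked prism $Y_{k,n}$ is the Cartesian product $C_k\,\square\,P_n$ of a $k$-cycle and a path on $n$ vertices: vertices $v_{i,j}$ ($1\le i\le n$, $1\le j\le k$), with edges $v_{i,j}v_{i,j+1}$ ($1\le j\le k-1$), $v_{i,k}v_{i,1}$ for each $i$, and $v_{i,j}v_{i+1,j}$ for $1\le i\le n-1$, $1\le j\le k$. *)

theory Defs
  imports Main
begin

definition odd_prime_graph :: "'a set \<Rightarrow> ('a \<Rightarrow> 'a \<Rightarrow> bool) \<Rightarrow> bool" where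
  "odd_prime_graph V E \<longleftrightarrow>
     (\<exists>l :: 'a \<Rightarrow> nat. bij_betw l V {m. odd m \<and> 1 \<le> m \<and> m \<le> 2 * card V - 1} \<and>
        (\<forall>u\<in>V. \<forall>v\<in>V. E u v \<longrightarrow> coprime (l u) (l v)))"

text \<open>Stacked prism Y_{k,n} = C_k \<box> P_n: vertex (i,j) stands for v_{i,j},
  1 \<le> i \<le> n, 1 \<le> j \<le> k.\<close>

definition prism_vertices :: "nat \<Rightarrow> nat \<Rightarrow> (nat \<times> nat) set" where
  "prism_vertices k n = {1..n} \<times> {1..k}"

definition prism_edge :: "nat \<Rightarrow> nat \<Rightarrow> nat \<times> nat \<Rightarrow> nat \<times> nat \<Rightarrow> bool" where
  "prism_edge k n x y \<longleftrightarrow> x \<in> prism_vertices k n \<and> y \<in> prism_vertices k n \<and>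
     (let (i, j) = x; (i', j') = y in
       (i = i' \<and> (j' = j + 1 \<or> j = j' + 1 \<or> (j = k \<and> j' = 1) \<or> (j = 1 \<and> j' = k)))
       \<or> (j = j' \<and> (i' = i + 1 \<or> i = i' + 1)))"

end

theory Submission
  imports Defs "HOL-Number_Theory.Cong"
begin

text \<open>Number the vertex \<open>v\<^sub>i\<^sub>,\<^sub>j\<close> by \<open>p(v\<^sub>i\<^sub>,\<^sub>j) = 3(i - 1) + (i + j) mod 3\<close>, so that row \<open>i\<close> occupies
  the block \<open>3(i - 1), 3(i - 1) + 1, 3(i - 1) + 2\<close>. Within a row the numbers differ by \<open>1\<close> or \<open>2\<close>;
  one step down a column raises the offset by one modulo \<open>3\<close>, so \<open>p\<close> grows by \<open>4\<close>, or by \<open>1\<close>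
  where the offset wraps from \<open>2\<close> to \<open>0\<close>. Thus adjacent vertices receive numbers differing by a
  power of two, hence so do their labels \<open>2p + 1\<close>, and two odd numbers differing by a power of
  two are coprime.\<close>

lemma coprime_odd_add_power_of_two:
  fixes a :: nat
  assumes "odd a"
  shows "coprime a (a + 2 ^ k)"
proof -
  have "coprime a (2 ^ k)"
    using assms by simp
  then show ?thesis
    by (simp add: coprime_iff_gcd_eq_1)
qed

lemma odd_numbers_upto_eq_image:
  "{m::nat. odd m \<and> 1 \<le> m \<and> m \<le> 2 * N - 1} = (\<lambda>k. 2 * k + 1) ` {..<N}"
  by (auto simp: image_iff elim!: oddE)

lemma odd_prime_graph_if_power_of_two_steps:
  fixes p :: "'a \<Rightarrow> nat"
  assumes bij: "bij_betw p V {..<card V}"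
    and steps: "\<And>u v. u \<in> V \<Longrightarrow> v \<in> V \<Longrightarrow> E u v \<Longrightarrow> \<exists>k. p v = p u + 2 ^ k \<or> p u = p v + 2 ^ k"
  shows "odd_prime_graph V E"
  unfolding odd_prime_graph_def
proof (intro exI conjI ballI impI)
  have "bij_betw (\<lambda>k::nat. 2 * k + 1) {..<card V} ((\<lambda>k. 2 * k + 1) ` {..<card V})"
    by (auto simp: bij_betw_def inj_on_def)
  then show "bij_betw (\<lambda>v. 2 * p v + 1) V {m. odd m \<and> 1 \<le> m \<and> m \<le> 2 * card V - 1}"
    unfolding odd_numbers_upto_eq_image using bij_betw_trans[OF bij] by (simp add: comp_def)
next
  fix u v assume "u \<in> V" "v \<in> V" "E u v"
  then obtain k where "p v = p u + 2 ^ k \<or> p u = p v + 2 ^ k"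
    using steps by blast
  then have "2 * p v + 1 = (2 * p u + 1) + 2 ^ Suc k \<or> 2 * p u + 1 = (2 * p v + 1) + 2 ^ Suc k"
    by auto
  moreover have "odd (2 * p u + 1)" "odd (2 * p v + 1)"
    by simp_all
  ultimately show "coprime (2 * p u + 1) (2 * p v + 1)"
    using coprime_odd_add_power_of_two coprime_commute by metis
qed

lemma inj_on_add_mod: "inj_on (\<lambda>j::nat. (i + j) mod m) {1..m}"
proof (rule inj_onI)
  fix j j' assume j: "j \<in> {1..m}" "j' \<in> {1..m}" and eq: "(i + j) mod m = (i + j') mod m"
  have "[(i + 1) + (j - 1) = (i + 1) + (j' - 1)] (mod m)"
    using j eq by (simp add: cong_def)
  then have "[j - 1 = j' - 1] (mod m)"
    by (simp only: cong_add_lcancel_nat)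
  then have "j - 1 = j' - 1"
    using j by (auto intro: cong_less_modulus_unique_nat)
  with j show "j = j'"
    by auto
qed

fun prism3_index :: "nat \<times> nat \<Rightarrow> nat" where
  "prism3_index (i, j) = 3 * (i - 1) + (i + j) mod 3"

lemma card_prism_vertices: "card (prism_vertices k n) = n * k"
  by (simp add: prism_vertices_def)

lemma inj_on_prism3_index: "inj_on prism3_index (prism_vertices 3 n)"
proof (rule inj_onI, clarify)
  fix i j i' j'
  assume V: "(i, j) \<in> prism_vertices 3 n" "(i', j') \<in> prism_vertices 3 n"
    and eq: "prism3_index (i, j) = prism3_index (i', j')"
  have "i - 1 = i' - 1"
    using arg_cong[OF eq, of "\<lambda>m. m div 3"] by simp
  with V have "i = i'"
    by (auto simp: prism_vertices_def)
  with eq have "(i + j) mod 3 = (i + j') mod 3"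
    by simp
  moreover have "j \<in> {1..3}" "j' \<in> {1..3}"
    using V by (auto simp: prism_vertices_def)
  ultimately have "j = j'"
    by (rule inj_onD[OF inj_on_add_mod])
  with \<open>i = i'\<close> show "i = i' \<and> j = j'" ..
qed

lemma bij_betw_prism3_index: "bij_betw prism3_index (prism_vertices 3 n) {..<3 * n}"
proof -
  have "prism3_index ` prism_vertices 3 n \<subseteq> {..<3 * n}"
    by (auto simp: prism_vertices_def)
  moreover have "card (prism3_index ` prism_vertices 3 n) = 3 * n"
    using inj_on_prism3_index card_prism_vertices by (simp add: card_image)
  ultimately show ?thesis
    using inj_on_prism3_index by (simp add: bij_betw_def card_subset_eq)
qed

lemma prism3_index_same_row:
  assumes "j \<in> {1..3}" "j' \<in> {1..3}" "j \<noteq> j'"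
  shows "\<exists>k. prism3_index (i, j') = prism3_index (i, j) + 2 ^ k
           \<or> prism3_index (i, j) = prism3_index (i, j') + 2 ^ k"
proof -
  define r r' where "r = (i + j) mod 3" and "r' = (i + j') mod 3"
  have "r \<noteq> r'"
    using inj_on_contraD[OF inj_on_add_mod assms(3,1,2)] unfolding r_def r'_def by simp
  moreover have "r < 3" "r' < 3"
    unfolding r_def r'_def by simp_all
  ultimately have "\<exists>k\<in>{0, 1}. r' = r + 2 ^ k \<or> r = r' + 2 ^ k"
    by auto
  then obtain k where "r' = r + 2 ^ k \<or> r = r' + 2 ^ k"
    by blast
  then show ?thesis
    unfolding r_def r'_def by auto
qed

lemma prism3_index_next_row:
  assumes "i \<ge> 1"
  shows "\<exists>k. prism3_index (i + 1, j) = prism3_index (i, j) + 2 ^ k"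
proof -
  define r where "r = (i + j) mod 3"
  have idx: "prism3_index (i, j) = 3 * (i - 1) + r" "prism3_index (i + 1, j) = 3 * i + (r + 1) mod 3"
    unfolding r_def by (simp_all add: mod_Suc_eq)
  have "r < 3"
    unfolding r_def by simp
  then have "prism3_index (i + 1, j) = prism3_index (i, j) + 2 ^ (if r = 2 then 0 else 2)"
    unfolding idx using assms by auto
  then show ?thesis ..
qed

lemma prism3_index_adjacent:
  assumes "prism_edge 3 n u v"
  shows "\<exists>k. prism3_index v = prism3_index u + 2 ^ k \<or> prism3_index u = prism3_index v + 2 ^ k"
proof -
  obtain i j i' j' where uv: "u = (i, j)" "v = (i', j')"
    by fastforce
  have V: "i \<ge> 1" "i' \<ge> 1" "j \<in> {1..3}" "j' \<in> {1..3}"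
    using assms by (auto simp: prism_edge_def prism_vertices_def uv)
  consider (row) "i' = i" "j \<noteq> j'" | (up) "j' = j" "i' = i + 1" | (down) "j' = j" "i = i' + 1"
    using assms by (auto simp: prism_edge_def uv)
  then show ?thesis
  proof cases
    case row
    then show ?thesis
      using prism3_index_same_row[OF V(3,4)] uv by (auto simp del: prism3_index.simps)
  next
    case up
    then show ?thesis
      using prism3_index_next_row[OF V(1)] uv by (auto simp del: prism3_index.simps)
  next
    case down
    then show ?thesis
      using prism3_index_next_row[OF V(2)] uv by (auto simp del: prism3_index.simps)
  qed
qed

theorem theorem3p6:
  fixes n :: nat
  assumes "n \<ge> 1"
  shows "odd_prime_graph (prism_vertices 3 n) (prism_edge 3 n)"
proof (rule odd_prime_graph_if_power_of_two_steps)
  show "bij_betw prism3_index (prism_vertices 3 n) {..<card (prism_vertices 3 n)}"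
    using bij_betw_prism3_index by (simp add: card_prism_vertices mult.commute)
qed (rule prism3_index_adjacent)

end
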